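(* Let $\nu>0$, let $K$ be a smooth positive function with antiderivative $J(u)=\int K(u)\,du$ assumed invertible, and let $B\neq 0$, $D\neq 0$, $Q$ be constants. Suppose $C(u)=D\,K(u)\exp\!\left(\frac{1}{B}J(u)\right)$. Then, on any region of $z>0$, $t>0$ where $Q+\frac{2(1-\nu)}{D}t>0$ and the argument below lies in the range of $J$, $$u(z,t)=J^{-1}\!\left(-2B\ln z+B\ln\left(Q+\frac{2(1-\nu)}{D}t\right)\right)$$ is a solution of $C(u)u_t=z^{-\nu}\left(K(u)z^{\nu}u_z\right)_z$. *)

theory Defs
  imports "HOL-Analysis.Analysis"
begin

definition smooth_fun :: "(real \<Rightarrow> real) \<Rightarrow> bool" where
  "smooth_fun f \<longleftrightarrow> (\<forall>n x. ((deriv ^^ n) f) differentiable (at x))"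

end

theory Submission
  imports Defs "HOL-Complex_Analysis.Conformal_Mappings"
begin

text \<open>
  Along the solution \<open>J(u) = -2 B ln z + B ln P(t)\<close>, where \<open>P(t) = Q + 2 (1 - \<nu>) t / D\<close>.
  Differentiating this identity with \<open>J' = K\<close> gives \<open>K(u) u_z = -2 B / z\<close> and
  \<open>K(u) u_t = B P' / P\<close>. Hence the flux \<open>K(u) z^\<nu> u_z = -2 B z^(\<nu> - 1)\<close> is explicit and
  the right-hand side equals \<open>2 B (1 - \<nu>) / z^2\<close>; on the left, \<open>exp (J(u) / B) = P / z^2\<close>
  turns \<open>C(u) u_t\<close> into \<open>D B P' / z^2\<close>, the same number.
\<close>

lemma DERIV_inv_comp:
  fixes J K g :: "real \<Rightarrow> real"
  assumes J_deriv: "\<And>x. (J has_real_derivative K x) (at x)" and "inj J"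
    and K_nz: "\<And>x. K x \<noteq> 0"
    and g_deriv: "(g has_real_derivative g') (at x)" and "g x \<in> range J"
  shows "((\<lambda>x. inv J (g x)) has_real_derivative g' / K (inv J (g x))) (at x)"
proof -
  obtain v where v: "g x = J v" using \<open>g x \<in> range J\<close> by auto
  have "continuous_on UNIV J"
    using J_deriv by (meson DERIV_isCont continuous_at_imp_continuous_on)
  then have "(inv J has_real_derivative inverse (K v)) (at (J v))"
    using J_deriv K_nz \<open>inj J\<close>
    by (intro has_field_derivative_inverse_strong[where S=UNIV]) auto
  moreover have "inv J (g x) = v" using v \<open>inj J\<close> by simp
  ultimately have "(inv J has_real_derivative inverse (K (inv J (g x)))) (at (g x))"
    using v by simp
  from DERIV_chain2[OF this g_deriv] show ?thesis
    by (simp add: divide_inverse mult.commute)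
qed

lemma DERIV_flux_power:
  fixes w K :: "real \<Rightarrow> real" and a nu :: real
  assumes "open U" "z \<in> U"
    and K_nz: "\<And>x. K x \<noteq> 0"
    and w_deriv: "\<And>y. y \<in> U \<Longrightarrow> y > 0 \<and> (w has_real_derivative a / y / K (w y)) (at y)"
  shows "((\<lambda>y. K (w y) * y powr nu * deriv w y) has_real_derivative
           a * (nu - 1) * z powr (nu - 2)) (at z)"
proof -
  have flux: "K (w y) * y powr nu * deriv w y = a * y powr (nu - 1)" if "y \<in> U" for y
  proof -
    have "y > 0" and "deriv w y = a / y / K (w y)"
      using w_deriv[OF that] DERIV_imp_deriv by auto
    then show ?thesis
      using K_nz by (simp add: powr_diff field_simps)
  qed
  have "((\<lambda>y. a * y powr (nu - 1)) has_real_derivative a * (nu - 1) * z powr (nu - 2)) (at z)"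
    using w_deriv[OF \<open>z \<in> U\<close>] by (auto intro!: derivative_eq_intros simp: algebra_simps)
  then show ?thesis
    using \<open>open U\<close> \<open>z \<in> U\<close> flux[symmetric] by (rule has_field_derivative_transform_within_open)
qed

lemma exp_ln_combination_div:
  fixes B z P :: real
  assumes "B \<noteq> 0" "z > 0" "P > 0"
  shows "exp ((-2 * B * ln z + B * ln P) / B) = P / z\<^sup>2"
proof -
  have "(-2 * B * ln z + B * ln P) / B = ln P - ln (z\<^sup>2)"
    using assms by (simp add: ln_realpow field_simps)
  then show ?thesis
    using assms by (simp add: exp_diff)
qed

theorem mainTheorem8:
  fixes K J C :: "real \<Rightarrow> real" and nu B D Q :: real and S :: "(real \<times> real) set"
    and u :: "real \<Rightarrow> real \<Rightarrow> real"
  assumes nu_pos: "nu > 0"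
    and K_smooth: "smooth_fun K"
    and K_pos: "\<And>x. K x > 0"
    and J_antideriv: "\<And>x. (J has_real_derivative K x) (at x)"
    and J_inj: "inj J"
    and B_nz: "B \<noteq> 0" and D_nz: "D \<noteq> 0"
    and C_def: "\<And>x. C x = D * K x * exp (J x / B)"
    and S_open: "open S"
    and S_region: "\<And>z t. (z, t) \<in> S \<Longrightarrow> z > 0 \<and> t > 0 \<and> Q + 2 * (1 - nu) / D * t > 0
        \<and> -2 * B * ln z + B * ln (Q + 2 * (1 - nu) / D * t) \<in> range J"
    and u_def: "\<And>z t. u z t = inv J (-2 * B * ln z + B * ln (Q + 2 * (1 - nu) / D * t))"
  shows "\<forall>(z, t) \<in> S.
           (\<lambda>s. u z s) differentiable (at t)
         \<and> (\<lambda>y. u y t) differentiable (at z)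
         \<and> (\<lambda>y. K (u y t) * y powr nu * deriv (\<lambda>w. u w t) y) differentiable (at z)
         \<and> C (u z t) * deriv (\<lambda>s. u z s) t
             = z powr (- nu) * deriv (\<lambda>y. K (u y t) * y powr nu * deriv (\<lambda>w. u w t) y) z"
proof clarify
  fix z t assume zt: "(z, t) \<in> S"
  define P where "P = Q + 2 * (1 - nu) / D * t"
  define U where "U = (\<lambda>y. (y, t)) -` S"
  have K_nz: "\<And>x. K x \<noteq> 0" using K_pos by (metis less_irrefl)
  note inv_J_comp = DERIV_inv_comp[OF J_antideriv J_inj K_nz]
  have "z > 0" "P > 0" and J_u: "J (u z t) = -2 * B * ln z + B * ln P"
    using S_region[OF zt] by (auto simp: P_def u_def f_inv_into_f)
  have "open U" "z \<in> U"
    using S_open zt by (auto simp: U_def intro!: continuous_open_vimage continuous_intros)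
  have u_z: "y > 0 \<and> ((\<lambda>y. u y t) has_real_derivative -2 * B / y / K (u y t)) (at y)"
    if "y \<in> U" for y
    using S_region[of y t] that unfolding U_def u_def P_def
    by (intro conjI inv_J_comp derivative_eq_intros) (simp_all, simp add: field_simps)
  have u_t: "((\<lambda>s. u z s) has_real_derivative
               B * (2 * (1 - nu) / D) / P / K (u z t)) (at t)"
    using S_region[OF zt] D_nz unfolding u_def P_def
    by (intro inv_J_comp derivative_eq_intros) (simp_all, simp add: field_simps)
  have flux: "((\<lambda>y. K (u y t) * y powr nu * deriv (\<lambda>w. u w t) y) has_real_derivative
                -2 * B * (nu - 1) * z powr (nu - 2)) (at z)"
    using DERIV_flux_power[OF \<open>open U\<close> \<open>z \<in> U\<close> K_nz u_z] by simp
  have "C (u z t) * deriv (\<lambda>s. u z s) t = 2 * B * (1 - nu) / z\<^sup>2"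
    using DERIV_imp_deriv[OF u_t] exp_ln_combination_div[OF B_nz \<open>z > 0\<close> \<open>P > 0\<close>]
      \<open>P > 0\<close> K_nz[of "u z t"] D_nz by (simp add: C_def J_u field_simps)
  moreover have "z powr (- nu) * (-2 * B * (nu - 1) * z powr (nu - 2)) = 2 * B * (1 - nu) / z\<^sup>2"
    using \<open>z > 0\<close> by (simp add: powr_diff powr_minus field_simps)
  ultimately show "(\<lambda>s. u z s) differentiable (at t)
      \<and> (\<lambda>y. u y t) differentiable (at z)
      \<and> (\<lambda>y. K (u y t) * y powr nu * deriv (\<lambda>w. u w t) y) differentiable (at z)
      \<and> C (u z t) * deriv (\<lambda>s. u z s) t
          = z powr (- nu) * deriv (\<lambda>y. K (u y t) * y powr nu * deriv (\<lambda>w. u w t) y) z"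
    using u_t u_z[OF \<open>z \<in> U\<close>] flux DERIV_imp_deriv[OF flux]
    by (auto simp: real_differentiable_def)
qed

end
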